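(* Let $w$ be a weight on $\mathbb{N}_0$ satisfying the discrete Pearson equation $\theta(k+1)w(k+1)=\sigma(k)w(k)$ for all $k\in\mathbb{N}_0$, with $\theta,\sigma$ polynomials and $\theta(0)=0$, and with the setting of the context. Then for all $z\in\mathbb{C}\setminus\mathbb{Z}$, $$\theta(z)Q(z)-\Psi^\top H^{-1}Q(z-1)=\sum_{k=0}^\infty P(k)\frac{\theta(z)-\theta(k)}{z-k}w(k),$$ $$\sigma(z)Q(z)-\Psi H^{-1}Q(z+1)=\sum_{k=0}^\infty P(k)\frac{\sigma(z)-\sigma(k)}{z-k}w(k).$$
   Context: The weight $w$ takes values $w(k)$ at $k\in\mathbb{N}_0$ with $\sum_kk^n|w(k)|<\infty$ for all $n$; moments $\rho_n=\sum_kk^nw(k)$, moment matrix $G=(\rho_{n+m})_{n,m\ge0}$ with all leading principal minors nonzero, so $G=S^{-1}HS^{-\top}$ with $S$ lower unitriangular and $H=\operatorname{diag}(H_0,H_1,\dots)$. $P(z)=S\chi(z)$, $\chi(z)=(1,z,z^2,\dots)^\top$, is the vector of monic orthogonal polynomials $P_n$ (with $\sum_kP_n(k)P_m(k)w(k)=\delta_{n,m}H_n$), and $Q(z)$ is the vector of second kind functions $Q_n(z)=\sum_{k=0}^\infty\frac{P_n(k)w(k)}{z-k}$. $\Lambda$ is the shift matrix (ones on the first superdiagonal), $J=S\Lambda S^{-1}$ the Jacobi matrix, $B$ the lower Pascal matrix $B_{n,m}=\binom nm$, $\Pi:=SBS^{-1}$ (so $P(z+1)=\Pi P(z)$). The Laguerre--Freud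 structure matrix is $\Psi:=\Pi^{-1}\theta(J)H$; under the Pearson equation it is known that also $\Psi=H\sigma(J^\top)\Pi^\top$, and $\Psi$ is banded. *)

theory Defs
  imports "HOL-Computational_Algebra.Polynomial" "Jordan_Normal_Form.Determinant"
begin

text \<open>Products are given by the (possibly infinite) series of the entrywise products;
  for all products occurring below (involving lower triangular / Hessenberg factors)
  only finitely many terms are nonzero.\<close>

type_synonym imat = "nat \<Rightarrow> nat \<Rightarrow> complex"
type_synonym ivec = "nat \<Rightarrow> complex"

definition mmult :: "imat \<Rightarrow> imat \<Rightarrow> imat" where
  "mmult A B = (\<lambda>i j. \<Sum>k. A i k * B k j)"

definition mvmult :: "imat \<Rightarrow> ivec \<Rightarrow> ivec" where
  "mvmult A v = (\<lambda>i. \<Sum>k. A i k * v k)"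

definition mtrans :: "imat \<Rightarrow> imat" where
  "mtrans A = (\<lambda>i j. A j i)"

definition idm :: imat where
  "idm = (\<lambda>i j. if i = j then 1 else 0)"

definition diagm :: "ivec \<Rightarrow> imat" where
  "diagm d = (\<lambda>i j. if i = j then d i else 0)"

fun mpow :: "imat \<Rightarrow> nat \<Rightarrow> imat" where
  "mpow A 0 = idm"
| "mpow A (Suc n) = mmult (mpow A n) A"

definition mpoly :: "complex poly \<Rightarrow> imat \<Rightarrow> imat" where
  "mpoly p A = (\<lambda>i j. \<Sum>d\<le>degree p. coeff p d * mpow A d i j)"

definition lower_unitri :: "imat \<Rightarrow> bool" where
  "lower_unitri S \<longleftrightarrow> (\<forall>i j. i < j \<longrightarrow> S i j = 0) \<and> (\<forall>i. S i i = 1)"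

definition linv :: "imat \<Rightarrow> imat" where
  "linv S = (THE T. lower_unitri T \<and> mmult S T = idm)"

definition shiftm :: imat where
  "shiftm = (\<lambda>i j. if j = Suc i then 1 else 0)"

definition pascal :: imat where
  "pascal = (\<lambda>n m. of_nat (n choose m))"

definition chi :: "complex \<Rightarrow> ivec" where
  "chi z = (\<lambda>n. z ^ n)"

definition moment :: "(nat \<Rightarrow> complex) \<Rightarrow> nat \<Rightarrow> complex" where
  "moment w n = (\<Sum>k. of_nat k ^ n * w k)"

definition momentm :: "(nat \<Rightarrow> complex) \<Rightarrow> imat" where
  "momentm w = (\<lambda>n m. moment w (n + m))"

definition trunc_mat :: "imat \<Rightarrow> nat \<Rightarrow> complex mat" where
  "trunc_mat A n = mat n n (\<lambda>(i, j). A i j)"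

definition Pvec :: "imat \<Rightarrow> complex \<Rightarrow> ivec" where
  "Pvec S z = mvmult S (chi z)"

definition Qvec :: "imat \<Rightarrow> (nat \<Rightarrow> complex) \<Rightarrow> complex \<Rightarrow> ivec" where
  "Qvec S w z = (\<lambda>n. \<Sum>k. Pvec S (of_nat k) n * w k / (z - of_nat k))"

definition jacobi :: "imat \<Rightarrow> imat" where
  "jacobi S = mmult (mmult S shiftm) (linv S)"

definition Pim :: "imat \<Rightarrow> imat" where
  "Pim S = mmult (mmult S pascal) (linv S)"

definition Psi :: "imat \<Rightarrow> ivec \<Rightarrow> complex poly \<Rightarrow> imat" where
  "Psi S Hd \<theta> = mmult (mmult (linv (Pim S)) (mpoly \<theta> (jacobi S))) (diagm Hd)"

end

theory Submission
  imports Defs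
begin

text \<open>The matrices \<open>\<Pi>\<^sup>-\<^sup>1\<theta>(J)\<close> and \<open>\<Pi>\<sigma>(J)\<close> have finitely many nonzero entries in each row,
  so they can be applied to the series defining \<open>Q\<close> term by term. Since \<open>J P(x) = x P(x)\<close>
  and \<open>\<Pi> P(x) = P(x + 1)\<close>, they send \<open>P(k)\<close> to \<open>\<theta>(k) P(k - 1)\<close> and \<open>\<sigma>(k) P(k + 1)\<close>.
  The Pearson equation together with \<open>\<theta>(0) = 0\<close> turns \<open>\<Sum>\<^sub>k \<theta>(k) w(k) f(k - 1)\<close> into
  \<open>\<Sum>\<^sub>k \<sigma>(k) w(k) f(k)\<close>. Applied to the orthogonality relations this gives
  \<open>\<Psi> = H \<sigma>(J\<^sup>T) \<Pi>\<^sup>T\<close>; applied to \<open>Q(z \<mp> 1)\<close> it shows that both correction terms equal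
  \<open>\<Sum>\<^sub>k \<rho>(k) P(k) w(k) / (z - k)\<close> for \<open>\<rho> = \<theta>, \<sigma>\<close>, and subtracting this from \<open>\<rho>(z) Q(z)\<close>
  gives the stated kernels.\<close>

definition upper_banded :: "nat \<Rightarrow> imat \<Rightarrow> bool" where
  "upper_banded b A \<longleftrightarrow> (\<forall>i j. i + b < j \<longrightarrow> A i j = 0)"

lemma upper_bandedD: "upper_banded b A \<Longrightarrow> i + b < j \<Longrightarrow> A i j = 0"
  by (simp add: upper_banded_def)

lemma mvmult_upper_banded:
  assumes "upper_banded b A" "i + b \<le> M"
  shows "mvmult A v i = (\<Sum>k\<le>M. A i k * v k)"
  unfolding mvmult_def
  by (rule suminf_finite) (use assms in \<open>auto simp: upper_banded_def\<close>)

lemma mmult_upper_banded: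
  assumes "upper_banded b A" "i + b \<le> M"
  shows "mmult A B i j = (\<Sum>k\<le>M. A i k * B k j)"
  unfolding mmult_def
  by (rule suminf_finite) (use assms in \<open>auto simp: upper_banded_def\<close>)

lemma upper_banded_mmult:
  assumes "upper_banded a A" "upper_banded b B"
  shows "upper_banded (a + b) (mmult A B)"
  unfolding upper_banded_def
proof (intro allI impI)
  fix i j assume ij: "i + (a + b) < j"
  have "mmult A B i j = (\<Sum>k\<le>i + a. A i k * B k j)"
    by (rule mmult_upper_banded[OF assms(1)]) simp
  also have "\<dots> = 0"
    by (rule sum.neutral) (use ij assms(2) in \<open>auto simp: upper_banded_def\<close>)
  finally show "mmult A B i j = 0" .
qed

lemma mmult_assoc:
  assumes A: "upper_banded a A" and B: "upper_banded b B"
  shows "mmult (mmult A B) C = mmult A (mmult B C)"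
proof (intro ext)
  fix i j
  let ?N = "i + a + b"
  have "mmult (mmult A B) C i j = (\<Sum>k\<le>?N. mmult A B i k * C k j)"
    by (rule mmult_upper_banded[OF upper_banded_mmult[OF A B]]) simp
  also have "\<dots> = (\<Sum>k\<le>?N. (\<Sum>l\<le>i + a. A i l * B l k) * C k j)"
    by (intro sum.cong refl, subst mmult_upper_banded[OF A]) auto
  also have "\<dots> = (\<Sum>l\<le>i + a. A i l * (\<Sum>k\<le>?N. B l k * C k j))"
    by (simp add: sum_distrib_left sum_distrib_right mult.assoc sum.swap[of _ "{..?N}"])
  also have "\<dots> = (\<Sum>l\<le>i + a. A i l * mmult B C l j)"
    by (intro sum.cong refl, subst mmult_upper_banded[OF B, of _ ?N]) auto
  also have "\<dots> = mmult A (mmult B C) i j"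
    by (rule mmult_upper_banded[OF A, symmetric]) simp
  finally show "mmult (mmult A B) C i j = mmult A (mmult B C) i j" .
qed

lemma mvmult_mmult:
  assumes A: "upper_banded a A" and B: "upper_banded b B"
  shows "mvmult (mmult A B) v = mvmult A (mvmult B v)"
proof -
  have as_mmult: "mvmult M u = (\<lambda>i. mmult M (\<lambda>k _. u k) i 0)" for M u
    by (simp add: mvmult_def mmult_def)
  have "mmult B (\<lambda>k _. v k) = (\<lambda>l _. mvmult B v l)"
    by (simp add: mvmult_def mmult_def)
  then show ?thesis
    by (simp add: as_mmult mmult_assoc[OF A B])
qed

lemma mvmult_mult_right:
  assumes "upper_banded b A"
  shows "mvmult A (\<lambda>j. v j * c) = (\<lambda>i. mvmult A v i * c)"
  by (intro ext) (simp add: mvmult_upper_banded[OF assms order_refl] sum_distrib_right mult.assoc)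

lemma mvmult_mult_left:
  assumes "upper_banded b A"
  shows "mvmult A (\<lambda>j. c * v j) = (\<lambda>i. c * mvmult A v i)"
  using mvmult_mult_right[OF assms, of v c] by (simp add: mult.commute)

lemma mvmult_sums:
  assumes A: "upper_banded b A" and f: "\<And>j. f j sums s j"
  shows "(\<lambda>k. mvmult A (\<lambda>j. f j k) i) sums mvmult A s i"
proof -
  have "(\<lambda>k. \<Sum>j\<le>i + b. A i j * f j k) sums (\<Sum>j\<le>i + b. A i j * s j)"
    by (intro sums_sum sums_mult f)
  then show ?thesis by (simp add: mvmult_upper_banded[OF A order_refl])
qed

lemma mvmult_delta: "mvmult A (\<lambda>j. if j = n then c else 0) i = A i n * c"
  unfolding mvmult_def by (subst suminf_finite[of "{n}"]) auto

lemma mmult_diagm: "mmult A (diagm d) i j = A i j * d j"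
  unfolding mmult_def diagm_def by (subst suminf_finite[of "{j}"]) auto

lemma upper_banded_idm: "upper_banded 0 idm"
  by (simp add: upper_banded_def idm_def)

lemma mvmult_idm: "mvmult idm v = v"
  by (intro ext, subst mvmult_upper_banded[OF upper_banded_idm order_refl])
    (simp add: idm_def if_distrib[of "\<lambda>u. u * _"] cong: if_cong)

lemma mmult_idm_left: "mmult idm B = B"
  by (intro ext, subst mmult_upper_banded[OF upper_banded_idm order_refl])
    (simp add: idm_def if_distrib[of "\<lambda>u. u * _"] cong: if_cong)

lemma mmult_idm_right:
  assumes "upper_banded b A"
  shows "mmult A idm = A"
proof (intro ext)
  fix i j
  have "mmult A idm i j = (if j \<le> i + b then A i j else 0)"
    by (simp add: mmult_upper_banded[OF assms order_refl] idm_def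
        if_distrib[of "\<lambda>u. _ * u"] cong: if_cong)
  then show "mmult A idm i j = A i j"
    using upper_bandedD[OF assms, of i j] by auto
qed

lemma upper_banded_shiftm: "upper_banded 1 shiftm"
  by (simp add: upper_banded_def shiftm_def)

lemma upper_banded_mpow:
  assumes "upper_banded 1 M"
  shows "upper_banded d (mpow M d)"
proof (induction d)
  case 0
  show ?case by (simp add: upper_banded_idm)
next
  case (Suc d)
  show ?case using upper_banded_mmult[OF Suc assms] by simp
qed

lemma upper_banded_mpoly:
  assumes "upper_banded 1 M"
  shows "upper_banded (degree p) (mpoly p M)"
  unfolding upper_banded_def mpoly_def
  by (auto intro!: sum.neutral upper_bandedD[OF upper_banded_mpow[OF assms]])

lemma mvmult_mpow_eigen:
  assumes M: "upper_banded 1 M" and v: "mvmult M v = (\<lambda>i. x * v i)"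
  shows "mvmult (mpow M d) v = (\<lambda>i. x ^ d * v i)"
proof (induction d)
  case 0
  then show ?case by (simp add: mvmult_idm)
next
  case (Suc d)
  have "mvmult (mpow M (Suc d)) v = mvmult (mpow M d) (\<lambda>i. x * v i)"
    using mvmult_mmult[OF upper_banded_mpow[OF M] M] v by simp
  also have "\<dots> = (\<lambda>i. x ^ Suc d * v i)"
    by (simp add: mvmult_mult_left[OF upper_banded_mpow[OF M]] Suc mult_ac)
  finally show ?case .
qed

lemma mvmult_mpoly_eigen:
  assumes M: "upper_banded 1 M" and v: "mvmult M v = (\<lambda>i. x * v i)"
  shows "mvmult (mpoly p M) v = (\<lambda>i. poly p x * v i)"
proof (intro ext)
  fix i
  let ?N = "i + degree p"
  have "mvmult (mpoly p M) v i = (\<Sum>k\<le>?N. (\<Sum>d\<le>degree p. coeff p d * mpow M d i k) * v k)"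
    by (subst mvmult_upper_banded[OF upper_banded_mpoly[OF M] order_refl]) (simp add: mpoly_def)
  also have "\<dots> = (\<Sum>d\<le>degree p. coeff p d * (\<Sum>k\<le>?N. mpow M d i k * v k))"
    by (simp add: sum_distrib_left sum_distrib_right mult.assoc sum.swap[of _ "{..?N}"])
  also have "\<dots> = (\<Sum>d\<le>degree p. coeff p d * x ^ d) * v i"
    by (simp add: mvmult_upper_banded[OF upper_banded_mpow[OF M], symmetric]
        mvmult_mpow_eigen[OF M v] sum_distrib_right mult.assoc)
  also have "\<dots> = poly p x * v i"
    by (simp add: poly_altdef mult.commute)
  finally show "mvmult (mpoly p M) v i = poly p x * v i" .
qed

lemma upper_banded_lower_unitri: "lower_unitri S \<Longrightarrow> upper_banded 0 S"
  by (simp add: lower_unitri_def upper_banded_def)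

lemma lower_unitri_pascal: "lower_unitri pascal"
  by (simp add: lower_unitri_def pascal_def)

lemma mmult_lower_unitri_row:
  assumes S: "lower_unitri S" and T: "upper_banded 0 T"
  shows "mmult S T i j = T i j + (\<Sum>k<i. S i k * T k j)"
proof -
  have "mmult S T i j = (\<Sum>k<Suc i. S i k * T k j)"
    using mmult_upper_banded[OF upper_banded_lower_unitri[OF S], of i i]
    by (simp add: lessThan_Suc_atMost)
  then show ?thesis using S by (simp add: lower_unitri_def)
qed

lemma lower_unitri_mmult:
  assumes A: "lower_unitri A" and B: "lower_unitri B"
  shows "lower_unitri (mmult A B)"
proof -
  have "upper_banded 0 (mmult A B)"
    using upper_banded_mmult[OF upper_banded_lower_unitri[OF A] upper_banded_lower_unitri[OF B]]
    by simp
  moreover have "mmult A B i i = 1" for i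
    using mmult_lower_unitri_row[OF A upper_banded_lower_unitri[OF B], of i i] B
    by (simp add: lower_unitri_def)
  ultimately show ?thesis by (simp add: lower_unitri_def upper_banded_def)
qed

text \<open>Forward substitution: an explicit right inverse, witnessing the \<open>THE\<close> in \<^const>\<open>linv\<close>.\<close>

function unitri_inv :: "imat \<Rightarrow> nat \<Rightarrow> nat \<Rightarrow> complex" where
  "unitri_inv S i j =
     (if i < j then 0 else if i = j then 1 else - (\<Sum>k<i. S i k * unitri_inv S k j))"
  by auto
termination by (relation "measure (\<lambda>(S, i, j). i)") auto

declare unitri_inv.simps [simp del]

lemma lower_unitri_unitri_inv: "lower_unitri (unitri_inv S)"
  by (simp add: lower_unitri_def unitri_inv.simps)

lemma mmult_unitri_inv:
  assumes S: "lower_unitri S"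
  shows "mmult S (unitri_inv S) = idm"
proof (intro ext)
  fix i j
  have "mmult S (unitri_inv S) i j = unitri_inv S i j + (\<Sum>k<i. S i k * unitri_inv S k j)"
    by (rule mmult_lower_unitri_row[OF S upper_banded_lower_unitri[OF lower_unitri_unitri_inv]])
  moreover have "(\<Sum>k<i. S i k * unitri_inv S k j) = 0" if "i \<le> j"
    using that by (intro sum.neutral) (auto simp: unitri_inv.simps)
  moreover have "unitri_inv S i j =
      (if i < j then 0 else if i = j then 1 else - (\<Sum>k<i. S i k * unitri_inv S k j))"
    by (rule unitri_inv.simps)
  ultimately show "mmult S (unitri_inv S) i j = idm i j"
    by (cases i j rule: linorder_cases) (auto simp: idm_def)
qed

lemma lower_unitri_right_inverse_unique:
  assumes S: "lower_unitri S" and T: "lower_unitri T" "mmult S T = idm"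
    and U: "lower_unitri U" "mmult S U = idm"
  shows "T = U"
proof -
  have "\<forall>j. T i j = U i j" for i
  proof (induction i rule: less_induct)
    case (less i)
    show ?case
    proof
      fix j
      have "T i j + (\<Sum>k<i. S i k * T k j) = U i j + (\<Sum>k<i. S i k * U k j)"
        using mmult_lower_unitri_row[OF S upper_banded_lower_unitri[OF T(1)], of i j]
          mmult_lower_unitri_row[OF S upper_banded_lower_unitri[OF U(1)], of i j] T(2) U(2)
        by simp
      moreover have "(\<Sum>k<i. S i k * T k j) = (\<Sum>k<i. S i k * U k j)"
        using less by (intro sum.cong) auto
      ultimately show "T i j = U i j" by simp
    qed
  qed
  then show ?thesis by blast
qed

lemma
  assumes S: "lower_unitri S"
  shows lower_unitri_linv: "lower_unitri (linv S)"
    and mmult_linv: "mmult S (linv S) = idm"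
proof -
  have "lower_unitri (linv S) \<and> mmult S (linv S) = idm"
    unfolding linv_def
    by (rule theI[of _ "unitri_inv S"])
      (use lower_unitri_unitri_inv mmult_unitri_inv[OF S]
        lower_unitri_right_inverse_unique[OF S] in blast)+
  then show "lower_unitri (linv S)" "mmult S (linv S) = idm" by auto
qed

lemma mmult_linv_left:
  assumes S: "lower_unitri S"
  shows "mmult (linv S) S = idm"
proof -
  let ?T = "linv S" let ?U = "linv ?T"
  have T: "lower_unitri ?T" "mmult S ?T = idm"
    using S by (rule lower_unitri_linv, rule mmult_linv)
  have U: "mmult ?T ?U = idm"
    using T(1) by (rule mmult_linv)
  have "S = mmult S (mmult ?T ?U)"
    using U mmult_idm_right[OF upper_banded_lower_unitri[OF S]] by simp
  also have "\<dots> = ?U"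
    by (simp add: mmult_assoc[OF upper_banded_lower_unitri[OF S] upper_banded_lower_unitri[OF T(1)],
          symmetric] T(2) mmult_idm_left)
  finally show ?thesis using U by simp
qed

lemma mvmult_linv_mvmult:
  assumes S: "lower_unitri S"
  shows "mvmult (linv S) (mvmult S v) = v"
  using mvmult_mmult[OF upper_banded_lower_unitri[OF lower_unitri_linv[OF S]]
      upper_banded_lower_unitri[OF S], of v]
  by (simp add: mmult_linv_left[OF S] mvmult_idm)

lemma mvmult_shiftm_chi: "mvmult shiftm (chi x) = (\<lambda>i. x * chi x i)"
  by (intro ext, subst mvmult_upper_banded[OF upper_banded_shiftm order_refl])
    (simp add: shiftm_def chi_def if_distrib[of "\<lambda>u. u * _"] cong: if_cong)

lemma mvmult_pascal_chi: "mvmult pascal (chi x) = chi (x + 1)"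
proof (intro ext)
  fix n
  have "mvmult pascal (chi x) n = (\<Sum>m\<le>n. of_nat (n choose m) * x ^ m)"
    by (subst mvmult_upper_banded[OF upper_banded_lower_unitri[OF lower_unitri_pascal] order_refl])
      (simp add: pascal_def chi_def)
  also have "\<dots> = (x + 1) ^ n"
    by (simp add: binomial_ring mult_ac)
  finally show "mvmult pascal (chi x) n = chi (x + 1) n"
    by (simp add: chi_def)
qed

definition lowering_op :: "imat \<Rightarrow> complex poly \<Rightarrow> imat" where
  "lowering_op S p = mmult (linv (Pim S)) (mpoly p (jacobi S))"

definition raising_op :: "imat \<Rightarrow> complex poly \<Rightarrow> imat" where
  "raising_op S p = mmult (Pim S) (mpoly p (jacobi S))"

lemma Psi_eq_lowering_op: "Psi S Hd \<theta> i j = lowering_op S \<theta> i j * Hd j"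
  by (simp add: Psi_def lowering_op_def mmult_diagm)

context
  fixes S :: imat
  assumes S: "lower_unitri S"
begin

private lemmas S_banded = upper_banded_lower_unitri[OF S]
private lemmas linv_banded = upper_banded_lower_unitri[OF lower_unitri_linv[OF S]]

lemma upper_banded_jacobi: "upper_banded 1 (jacobi S)"
  using upper_banded_mmult[OF upper_banded_mmult[OF S_banded upper_banded_shiftm] linv_banded]
  by (simp add: jacobi_def)

lemma mvmult_jacobi_Pvec: "mvmult (jacobi S) (Pvec S x) = (\<lambda>i. x * Pvec S x i)"
proof -
  have "mvmult (jacobi S) (Pvec S x) = mvmult (mmult S shiftm) (chi x)"
    using mvmult_mmult[OF upper_banded_mmult[OF S_banded upper_banded_shiftm] linv_banded]
    by (simp add: jacobi_def Pvec_def mvmult_linv_mvmult[OF S])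
  also have "\<dots> = mvmult S (\<lambda>i. x * chi x i)"
    by (simp add: mvmult_mmult[OF S_banded upper_banded_shiftm] mvmult_shiftm_chi)
  finally show ?thesis
    by (simp add: mvmult_mult_left[OF S_banded] Pvec_def)
qed

lemma lower_unitri_Pim: "lower_unitri (Pim S)"
  unfolding Pim_def by (intro lower_unitri_mmult lower_unitri_pascal S lower_unitri_linv)

lemma mvmult_Pim_Pvec: "mvmult (Pim S) (Pvec S x) = Pvec S (x + 1)"
proof -
  have pascal_banded: "upper_banded 0 pascal"
    by (rule upper_banded_lower_unitri[OF lower_unitri_pascal])
  have "mvmult (Pim S) (Pvec S x) = mvmult (mmult S pascal) (chi x)"
    using mvmult_mmult[OF upper_banded_mmult[OF S_banded pascal_banded] linv_banded]
    by (simp add: Pim_def Pvec_def mvmult_linv_mvmult[OF S])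
  then show ?thesis
    by (simp add: mvmult_mmult[OF S_banded pascal_banded] mvmult_pascal_chi Pvec_def)
qed

lemma mvmult_linv_Pim_Pvec: "mvmult (linv (Pim S)) (Pvec S x) = Pvec S (x - 1)"
  using mvmult_linv_mvmult[OF lower_unitri_Pim, of "Pvec S (x - 1)"]
  by (simp add: mvmult_Pim_Pvec)

lemma upper_banded_lowering_op: "upper_banded (degree p) (lowering_op S p)"
  using upper_banded_mmult[OF upper_banded_lower_unitri[OF lower_unitri_linv[OF lower_unitri_Pim]]
      upper_banded_mpoly[OF upper_banded_jacobi]]
  by (simp add: lowering_op_def)

lemma upper_banded_raising_op: "upper_banded (degree p) (raising_op S p)"
  using upper_banded_mmult[OF upper_banded_lower_unitri[OF lower_unitri_Pim]
      upper_banded_mpoly[OF upper_banded_jacobi]]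
  by (simp add: raising_op_def)

lemma mvmult_lowering_op_Pvec:
  "mvmult (lowering_op S p) (Pvec S x) = (\<lambda>i. poly p x * Pvec S (x - 1) i)"
proof -
  have Pim_inv_banded: "upper_banded 0 (linv (Pim S))"
    by (rule upper_banded_lower_unitri[OF lower_unitri_linv[OF lower_unitri_Pim]])
  show ?thesis
    unfolding lowering_op_def mvmult_mmult[OF Pim_inv_banded upper_banded_mpoly[OF upper_banded_jacobi]]
    by (simp add: mvmult_mpoly_eigen[OF upper_banded_jacobi mvmult_jacobi_Pvec]
        mvmult_mult_left[OF Pim_inv_banded] mvmult_linv_Pim_Pvec)
qed

lemma mvmult_raising_op_Pvec:
  "mvmult (raising_op S p) (Pvec S x) = (\<lambda>i. poly p x * Pvec S (x + 1) i)"
proof -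
  have Pim_banded: "upper_banded 0 (Pim S)"
    by (rule upper_banded_lower_unitri[OF lower_unitri_Pim])
  show ?thesis
    unfolding raising_op_def mvmult_mmult[OF Pim_banded upper_banded_mpoly[OF upper_banded_jacobi]]
    by (simp add: mvmult_mpoly_eigen[OF upper_banded_jacobi mvmult_jacobi_Pvec]
        mvmult_mult_left[OF Pim_banded] mvmult_Pim_Pvec)
qed

end

lemma summable_moment:
  assumes "\<And>n. summable (\<lambda>k. real k ^ n * norm (w k))"
  shows "summable (\<lambda>k. of_nat k ^ n * w k :: complex)"
  by (rule summable_norm_cancel) (simp add: norm_mult norm_power assms)

lemma summable_moment_divide:
  assumes "\<And>n. summable (\<lambda>k. real k ^ n * norm (w k))"
  shows "summable (\<lambda>k. of_nat k ^ n * (w k / (z - of_nat k)) :: complex)"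
proof (rule summable_comparison_test')
  show "summable (\<lambda>k. real k ^ n * norm (w k))" by (rule assms)
  show "norm (of_nat k ^ n * (w k / (z - of_nat k))) \<le> real k ^ n * norm (w k)"
    if "nat \<lceil>norm z\<rceil> + 1 \<le> k" for k
  proof -
    have "norm (z - of_nat k) \<ge> real k - norm z"
      using norm_triangle_ineq2[of "of_nat k" z] by (simp add: norm_minus_commute)
    with that have "norm (z - of_nat k) \<ge> 1" by linarith
    then have "norm (w k) / norm (z - of_nat k) \<le> norm (w k) / 1"
      by (intro divide_left_mono) auto
    then have "norm (w k / (z - of_nat k)) \<le> norm (w k)"
      by (simp add: norm_divide)
    then show ?thesis
      unfolding norm_mult norm_power norm_of_nat by (rule mult_left_mono) simp
  qed
qed

locale orthogonal_weight =
  fixes w :: "nat \<Rightarrow> complex" and S :: imat and Hd :: "nat \<Rightarrow> complex"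
  assumes moments_summable: "\<And>n. summable (\<lambda>k. real k ^ n * norm (w k))"
    and minors_nonzero: "\<And>n. det (trunc_mat (momentm w) n) \<noteq> 0"
    and lower_unitri_S: "lower_unitri S"
    and momentm_eq: "momentm w = mmult (mmult (linv S) (diagm Hd)) (mtrans (linv S))"
begin

lemmas upper_banded_S = upper_banded_lower_unitri[OF lower_unitri_S]

lemma mvmult_S_moments: "mvmult S (\<lambda>j. moment w (i + j)) m = linv S i m * Hd m"
proof -
  have "(\<lambda>j. moment w (i + j)) = mvmult (linv S) (\<lambda>a. linv S i a * Hd a)"
    using fun_cong[OF fun_cong[OF momentm_eq, of i]]
    by (simp add: fun_eq_iff momentm_def mmult_def[of "mmult _ _"] mmult_diagm mtrans_def
        mvmult_def mult.commute)
  moreover have "upper_banded 0 (linv S)"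
    by (rule upper_banded_lower_unitri[OF lower_unitri_linv[OF lower_unitri_S]])
  ultimately show ?thesis
    by (simp add: mvmult_mmult[OF upper_banded_S, symmetric] mmult_linv[OF lower_unitri_S] mvmult_idm)
qed

lemma Pvec_moment_sums:
  "(\<lambda>k. Pvec S (of_nat k) m * (of_nat k ^ i * w k)) sums (linv S i m * Hd m)"
proof -
  have "(\<lambda>j. of_nat k ^ j * (of_nat k ^ i * w k)) = (\<lambda>j. of_nat k ^ (i + j) * w k)" for k
    by (simp add: power_add mult_ac)
  then have "(\<lambda>k. mvmult S (\<lambda>j. chi (of_nat k) j * (of_nat k ^ i * w k)) m)
      sums mvmult S (\<lambda>j. moment w (i + j)) m"
    using mvmult_sums[OF upper_banded_S, of "\<lambda>j k. of_nat k ^ (i + j) * w k"]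
      summable_sums[OF summable_moment[OF moments_summable]]
    by (simp add: chi_def moment_def)
  then show ?thesis
    by (simp add: mvmult_S_moments mvmult_mult_right[OF upper_banded_S] Pvec_def)
qed

lemma orthogonality:
  "(\<lambda>k. Pvec S (of_nat k) n * (Pvec S (of_nat k) m * w k)) sums (if n = m then Hd m else 0)"
proof -
  have S_linv_column: "mvmult S (\<lambda>i. linv S i m) n = mmult S (linv S) n m"
    by (simp add: mvmult_def mmult_def)
  have "(\<lambda>k. mvmult S (\<lambda>i. chi (of_nat k) i * (Pvec S (of_nat k) m * w k)) n)
      sums mvmult S (\<lambda>i. linv S i m * Hd m) n"
    by (rule mvmult_sums[OF upper_banded_S]) (use Pvec_moment_sums in \<open>simp add: chi_def mult_ac\<close>)
  moreover have "(\<lambda>k. mvmult S (\<lambda>i. chi (of_nat k) i * (Pvec S (of_nat k) m * w k)) n)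
      = (\<lambda>k. Pvec S (of_nat k) n * (Pvec S (of_nat k) m * w k))"
    by (simp only: mvmult_mult_right[OF upper_banded_S] Pvec_def)
  moreover have "mvmult S (\<lambda>i. linv S i m * Hd m) n = (if n = m then Hd m else 0)"
    using S_linv_column
    by (simp add: mvmult_mult_right[OF upper_banded_S] mmult_linv[OF lower_unitri_S] idm_def)
  ultimately show ?thesis
    by simp
qed

text \<open>If \<open>H\<^sub>m = 0\<close>, row \<open>m\<close> of \<open>S\<close> is a nonzero null vector of the \<open>(m + 1) \<times> (m + 1)\<close>
  truncation of the moment matrix.\<close>

lemma Hd_nonzero: "Hd m \<noteq> 0"
proof
  assume H0: "Hd m = 0"
  let ?N = "Suc m"
  let ?A = "trunc_mat (momentm w) ?N"
  let ?u = "vec ?N (\<lambda>j. S m j)"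
  have A: "?A \<in> carrier_mat ?N ?N" by (simp add: trunc_mat_def)
  have u0: "?u \<noteq> 0\<^sub>v ?N"
  proof
    assume "?u = 0\<^sub>v ?N"
    then have "?u $ m = 0\<^sub>v ?N $ m" by simp
    with lower_unitri_S show False by (simp add: lower_unitri_def)
  qed
  have "?A *\<^sub>v ?u = 0\<^sub>v ?N"
  proof (rule eq_vecI)
    fix i assume i: "i < dim_vec (0\<^sub>v ?N :: complex vec)"
    have "(?A *\<^sub>v ?u) $ i = (\<Sum>j<?N. moment w (i + j) * S m j)"
      using i by (simp add: trunc_mat_def mult_mat_vec_def scalar_prod_def momentm_def
          atLeast0LessThan)
    also have "\<dots> = mvmult S (\<lambda>j. moment w (i + j)) m"
      by (simp add: mvmult_upper_banded[OF upper_banded_S order_refl] lessThan_Suc_atMost mult.commute)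
    finally show "(?A *\<^sub>v ?u) $ i = 0\<^sub>v ?N $ i"
      using i H0 by (simp add: mvmult_S_moments)
  qed (simp add: trunc_mat_def)
  then have "det ?A = 0"
    using det_0_iff_vec_prod_zero[OF A] vec_carrier u0 by blast
  with minors_nonzero show False by blast
qed

lemma Qvec_sums: "(\<lambda>k. Pvec S (of_nat k) n * (w k / (z - of_nat k))) sums Qvec S w z n"
proof -
  have "(\<lambda>k. mvmult S (\<lambda>j. chi (of_nat k) j * (w k / (z - of_nat k))) n)
      sums mvmult S (\<lambda>j. \<Sum>k. of_nat k ^ j * (w k / (z - of_nat k))) n"
    by (rule mvmult_sums[OF upper_banded_S])
      (use summable_moment_divide[OF moments_summable] in \<open>simp add: chi_def summable_sums\<close>)
  then have "summable (\<lambda>k. Pvec S (of_nat k) n * (w k / (z - of_nat k)))"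
    by (simp only: mvmult_mult_right[OF upper_banded_S] Pvec_def sums_summable)
  from summable_sums[OF this] show ?thesis
    by (simp add: Qvec_def)
qed

lemma mvmult_Pvec_orthogonality_sums:
  assumes "upper_banded b M"
  shows "(\<lambda>k. mvmult M (Pvec S (of_nat k)) m * (Pvec S (of_nat k) n * w k)) sums (M m n * Hd n)"
proof -
  have "(\<lambda>k. mvmult M (\<lambda>j. Pvec S (of_nat k) j * (Pvec S (of_nat k) n * w k)) m)
      sums mvmult M (\<lambda>j. if j = n then Hd n else 0) m"
    by (rule mvmult_sums[OF assms orthogonality])
  then show ?thesis
    by (simp only: mvmult_mult_right[OF assms] mvmult_delta)
qed

lemma mvmult_Qvec_sums:
  assumes "upper_banded b M"
  shows "(\<lambda>k. mvmult M (Pvec S (of_nat k)) n * (w k / (z - of_nat k))) sums mvmult M (Qvec S w z) n"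
proof -
  have "(\<lambda>k. mvmult M (\<lambda>j. Pvec S (of_nat k) j * (w k / (z - of_nat k))) n)
      sums mvmult M (Qvec S w z) n"
    by (rule mvmult_sums[OF assms Qvec_sums])
  then show ?thesis
    by (simp only: mvmult_mult_right[OF assms])
qed

lemma Qvec_kernel_sums:
  assumes "(\<lambda>k. poly p (of_nat k) * Pvec S (of_nat k) n * (w k / (z - of_nat k))) sums s"
  shows "(\<lambda>k. Pvec S (of_nat k) n * ((poly p z - poly p (of_nat k)) / (z - of_nat k)) * w k)
    sums (poly p z * Qvec S w z n - s)"
proof -
  have "(\<lambda>k. poly p z * (Pvec S (of_nat k) n * (w k / (z - of_nat k)))
        - poly p (of_nat k) * Pvec S (of_nat k) n * (w k / (z - of_nat k)))
      sums (poly p z * Qvec S w z n - s)"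
    by (intro sums_diff sums_mult Qvec_sums assms)
  then show ?thesis
    by (simp add: divide_inverse algebra_simps)
qed

end

locale pearson_weight = orthogonal_weight +
  fixes \<theta> \<sigma> :: "complex poly"
  assumes pearson: "\<And>k. poly \<theta> (of_nat (Suc k)) * w (Suc k) = poly \<sigma> (of_nat k) * w k"
    and theta_0: "poly \<theta> 0 = 0"
begin

lemma pearson_sums_shift_iff:
  fixes f :: "complex \<Rightarrow> complex"
  shows "(\<lambda>k. poly \<theta> (of_nat k) * w k * f (of_nat k - 1)) sums s
    \<longleftrightarrow> (\<lambda>k. poly \<sigma> (of_nat k) * w k * f (of_nat k)) sums s"
proof -
  have "of_nat (Suc k) - 1 = (of_nat k :: complex)" for k
    by simp
  then have shifted: "(\<lambda>k. poly \<theta> (of_nat (Suc k)) * w (Suc k) * f (of_nat (Suc k) - 1))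
      = (\<lambda>k. poly \<sigma> (of_nat k) * w k * f (of_nat k))"
    by (simp only: pearson)
  show ?thesis
    using sums_Suc_iff[of "\<lambda>k. poly \<theta> (of_nat k) * w k * f (of_nat k - 1)" s]
    unfolding shifted by (simp add: theta_0)
qed

lemma Psi_eq_Hd_mult_raising_op: "Psi S Hd \<theta> m n = Hd m * raising_op S \<sigma> n m"
proof -
  define f where "f x = Pvec S x m * Pvec S (x + 1) n" for x
  have "(\<lambda>k. poly \<theta> (of_nat k) * w k * f (of_nat k - 1)) sums (lowering_op S \<theta> m n * Hd n)"
    using mvmult_Pvec_orthogonality_sums[OF upper_banded_lowering_op[OF lower_unitri_S, of \<theta>], of m n]
    by (simp add: mvmult_lowering_op_Pvec[OF lower_unitri_S] f_def mult_ac)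
  moreover have "(\<lambda>k. poly \<sigma> (of_nat k) * w k * f (of_nat k)) sums (raising_op S \<sigma> n m * Hd m)"
    using mvmult_Pvec_orthogonality_sums[OF upper_banded_raising_op[OF lower_unitri_S, of \<sigma>], of n m]
    by (simp add: mvmult_raising_op_Pvec[OF lower_unitri_S] f_def mult_ac)
  ultimately have "lowering_op S \<theta> m n * Hd n = raising_op S \<sigma> n m * Hd m"
    by (simp add: pearson_sums_shift_iff sums_unique2)
  then show ?thesis
    by (simp add: Psi_eq_lowering_op mult.commute)
qed

lemma lowering_op_Qvec_sums:
  "(\<lambda>k. poly \<sigma> (of_nat k) * Pvec S (of_nat k) n * (w k / (z - of_nat k)))
    sums mvmult (lowering_op S \<theta>) (Qvec S w (z + 1)) n"
proof -
  define f where "f x = Pvec S x n / (z - x)" for x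
  have "(\<lambda>k. poly \<theta> (of_nat k) * w k * f (of_nat k - 1))
      sums mvmult (lowering_op S \<theta>) (Qvec S w (z + 1)) n"
    using mvmult_Qvec_sums[OF upper_banded_lowering_op[OF lower_unitri_S, of \<theta>], of n "z + 1"]
    by (simp add: mvmult_lowering_op_Pvec[OF lower_unitri_S] f_def diff_diff_eq2 mult_ac)
  then have "(\<lambda>k. poly \<sigma> (of_nat k) * w k * f (of_nat k))
      sums mvmult (lowering_op S \<theta>) (Qvec S w (z + 1)) n"
    by (simp only: pearson_sums_shift_iff)
  then show ?thesis
    by (simp add: f_def mult_ac)
qed

lemma raising_op_Qvec_sums:
  "(\<lambda>k. poly \<theta> (of_nat k) * Pvec S (of_nat k) n * (w k / (z - of_nat k)))
    sums mvmult (raising_op S \<sigma>) (Qvec S w (z - 1)) n"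
proof -
  define f where "f x = Pvec S (x + 1) n / (z - 1 - x)" for x
  have "(\<lambda>k. poly \<sigma> (of_nat k) * w k * f (of_nat k))
      sums mvmult (raising_op S \<sigma>) (Qvec S w (z - 1)) n"
    using mvmult_Qvec_sums[OF upper_banded_raising_op[OF lower_unitri_S, of \<sigma>], of n "z - 1"]
    by (simp add: mvmult_raising_op_Pvec[OF lower_unitri_S] f_def mult_ac)
  then have "(\<lambda>k. poly \<theta> (of_nat k) * w k * f (of_nat k - 1))
      sums mvmult (raising_op S \<sigma>) (Qvec S w (z - 1)) n"
    by (simp only: pearson_sums_shift_iff)
  then show ?thesis
    by (simp add: f_def diff_diff_eq2 mult_ac)
qed

end

theorem mainTheorem7:
  fixes w :: "nat \<Rightarrow> complex" and \<theta> \<sigma> :: "complex poly"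
    and S :: "nat \<Rightarrow> nat \<Rightarrow> complex" and Hd :: "nat \<Rightarrow> complex" and z :: complex
  assumes mom: "\<And>n. summable (\<lambda>k. real k ^ n * norm (w k))"
    and minors: "\<And>n. det (trunc_mat (momentm w) n) \<noteq> 0"
    and S: "lower_unitri S"
    and GB: "momentm w = mmult (mmult (linv S) (diagm Hd)) (mtrans (linv S))"
    and pearson: "\<And>k. poly \<theta> (of_nat (Suc k)) * w (Suc k) = poly \<sigma> (of_nat k) * w k"
    and theta0: "poly \<theta> 0 = 0"
    and z: "z \<notin> \<int>"
  shows "((\<lambda>n. poly \<theta> z * Qvec S w z n
              - (\<Sum>m. Psi S Hd \<theta> m n / Hd m * Qvec S w (z - 1) m))
         = (\<lambda>n. \<Sum>k. Pvec S (of_nat k) n * ((poly \<theta> z - poly \<theta> (of_nat k)) / (z - of_nat k)) * w k))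
       \<and> ((\<lambda>n. poly \<sigma> z * Qvec S w z n
              - (\<Sum>m. Psi S Hd \<theta> n m / Hd m * Qvec S w (z + 1) m))
         = (\<lambda>n. \<Sum>k. Pvec S (of_nat k) n * ((poly \<sigma> z - poly \<sigma> (of_nat k)) / (z - of_nat k)) * w k))"
proof -
  interpret pearson_weight w S Hd \<theta> \<sigma>
    using mom minors S GB pearson theta0 by unfold_locales
  have Psi_column: "Psi S Hd \<theta> m n / Hd m = raising_op S \<sigma> n m" for m n
    by (simp add: Psi_eq_Hd_mult_raising_op Hd_nonzero)
  have Psi_row: "Psi S Hd \<theta> n m / Hd m = lowering_op S \<theta> n m" for n m
    by (simp add: Psi_eq_lowering_op Hd_nonzero)
  have "poly \<theta> z * Qvec S w z n - mvmult (raising_op S \<sigma>) (Qvec S w (z - 1)) n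
      = (\<Sum>k. Pvec S (of_nat k) n * ((poly \<theta> z - poly \<theta> (of_nat k)) / (z - of_nat k)) * w k)" for n
    by (rule sums_unique[OF Qvec_kernel_sums[OF raising_op_Qvec_sums]])
  moreover have "poly \<sigma> z * Qvec S w z n - mvmult (lowering_op S \<theta>) (Qvec S w (z + 1)) n
      = (\<Sum>k. Pvec S (of_nat k) n * ((poly \<sigma> z - poly \<sigma> (of_nat k)) / (z - of_nat k)) * w k)" for n
    by (rule sums_unique[OF Qvec_kernel_sums[OF lowering_op_Qvec_sums]])
  ultimately show ?thesis
    by (simp add: Psi_column Psi_row mvmult_def fun_eq_iff)
qed

end
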